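(* For every torus of tensor product $y=\gamma\otimes\hat\gamma$ one has $W(y)>2\pi^2$.
   Context: Let $\gamma:\mathbb{R}\to S^n\subset\mathbb{R}^{n+1}$ and $\hat\gamma:\mathbb{R}\to S^m\subset\mathbb{R}^{m+1}$ be smooth closed curves parametrized by arc length with periods equal to their lengths. For $x\in\mathbb{R}^{n+1}$, $\hat x\in\mathbb{R}^{m+1}$ the tensor product is $x\otimes\hat x=(x_i\hat x_j)_{i,j}\in\mathbb{R}^{(n+1)(m+1)}$ (lexicographic order). The torus of tensor product is $y=\gamma\otimes\hat\gamma:(s,\hat s)\mapsto\gamma(s)\otimes\hat\gamma(\hat s)\in S^{(n+1)(m+1)-1}$. For a closed immersed surface $x:M\to S^N$ with mean curvature vector $\vec H$ and Gauss curvature $K$, the Willmore functional is $W(x)=\int_M(|\vec H|^2-K+1)\,dM$. *)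

theory Defs
  imports "HOL-Analysis.Analysis"
begin

definition smooth_curve :: "(real \<Rightarrow> 'a::real_normed_vector) \<Rightarrow> bool" where
  "smooth_curve c \<longleftrightarrow> (\<exists>D. D 0 = c \<and> (\<forall>k t. (D k has_vector_derivative D (Suc k) t) (at t)))"

definition closed_unit_speed_sphere_curve :: "(real \<Rightarrow> real^'n) \<Rightarrow> real \<Rightarrow> bool" where
  "closed_unit_speed_sphere_curve c L \<longleftrightarrow>
     smooth_curve c \<and> 0 < L \<and> (\<forall>s. c (s + L) = c s) \<and>
     (\<forall>s. norm (c s) = 1) \<and> (\<forall>s. norm (vector_derivative c (at s)) = 1)"

definition tensor :: "real^'n \<Rightarrow> real^'m \<Rightarrow> real^('n \<times> 'm)" where
  "tensor x z = (\<chi> ij. x $ fst ij * z $ snd ij)"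

definition tensor_torus :: "(real \<Rightarrow> real^'n) \<Rightarrow> (real \<Rightarrow> real^'m) \<Rightarrow> real \<times> real \<Rightarrow> real^('n \<times> 'm)" where
  "tensor_torus c d = (\<lambda>(s, t). tensor (c s) (d t))"

definition pd1 :: "(real \<times> real \<Rightarrow> 'a::real_normed_vector) \<Rightarrow> real \<times> real \<Rightarrow> 'a" where
  "pd1 x = (\<lambda>(s, t). vector_derivative (\<lambda>u. x (u, t)) (at s))"

definition pd2 :: "(real \<times> real \<Rightarrow> 'a::real_normed_vector) \<Rightarrow> real \<times> real \<Rightarrow> 'a" where
  "pd2 x = (\<lambda>(s, t). vector_derivative (\<lambda>v. x (s, v)) (at t))"

definition fE :: "(real \<times> real \<Rightarrow> real^'k) \<Rightarrow> real \<times> real \<Rightarrow> real" where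
  "fE x p = pd1 x p \<bullet> pd1 x p"
definition fF :: "(real \<times> real \<Rightarrow> real^'k) \<Rightarrow> real \<times> real \<Rightarrow> real" where
  "fF x p = pd1 x p \<bullet> pd2 x p"
definition fG :: "(real \<times> real \<Rightarrow> real^'k) \<Rightarrow> real \<times> real \<Rightarrow> real" where
  "fG x p = pd2 x p \<bullet> pd2 x p"
definition gdet :: "(real \<times> real \<Rightarrow> real^'k) \<Rightarrow> real \<times> real \<Rightarrow> real" where
  "gdet x p = fE x p * fG x p - (fF x p)\<^sup>2"

text \<open>Orthogonal projection onto the tangent plane span(x_s, x_t), and the normal
  components in the Euclidean space R^k and in the unit sphere S^(k-1).\<close>
definition tan_part :: "(real \<times> real \<Rightarrow> real^'k) \<Rightarrow> real \<times> real \<Rightarrow> real^'k \<Rightarrow> real^'k" where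
  "tan_part x p v =
     (1 / gdet x p) *\<^sub>R
       ((fG x p * (v \<bullet> pd1 x p) - fF x p * (v \<bullet> pd2 x p)) *\<^sub>R pd1 x p +
        (fE x p * (v \<bullet> pd2 x p) - fF x p * (v \<bullet> pd1 x p)) *\<^sub>R pd2 x p)"

definition eucl_normal :: "(real \<times> real \<Rightarrow> real^'k) \<Rightarrow> real \<times> real \<Rightarrow> real^'k \<Rightarrow> real^'k" where
  "eucl_normal x p v = v - tan_part x p v"

text \<open>For x with values in the unit sphere, the normal space of the surface inside the
  sphere is the orthogonal complement of span(x_s, x_t, x).\<close>
definition sphere_normal :: "(real \<times> real \<Rightarrow> real^'k) \<Rightarrow> real \<times> real \<Rightarrow> real^'k \<Rightarrow> real^'k" where
  "sphere_normal x p v = eucl_normal x p v - (v \<bullet> x p) *\<^sub>R x p"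

definition x11 where "x11 x = pd1 (pd1 x)"
definition x12 where "x12 x = pd2 (pd1 x)"
definition x22 where "x22 x = pd2 (pd2 x)"

text \<open>Mean curvature vector of x in the sphere: H = (1/2) g^{ij} B_ij.\<close>
definition mean_curv_vec :: "(real \<times> real \<Rightarrow> real^'k) \<Rightarrow> real \<times> real \<Rightarrow> real^'k" where
  "mean_curv_vec x p =
     (1 / (2 * gdet x p)) *\<^sub>R
       (fG x p *\<^sub>R sphere_normal x p (x11 x p) - (2 * fF x p) *\<^sub>R sphere_normal x p (x12 x p)
        + fE x p *\<^sub>R sphere_normal x p (x22 x p))"

text \<open>Gauss curvature of the induced metric, computed (Theorema Egregium / Gauss equation)
  from the second fundamental form in the Euclidean space R^k.\<close>
definition gauss_curv :: "(real \<times> real \<Rightarrow> real^'k) \<Rightarrow> real \<times> real \<Rightarrow> real" where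
  "gauss_curv x p =
     (eucl_normal x p (x11 x p) \<bullet> eucl_normal x p (x22 x p)
      - eucl_normal x p (x12 x p) \<bullet> eucl_normal x p (x12 x p)) / gdet x p"

text \<open>Willmore functional of the doubly periodic surface x, periods a and b, i.e. of the
  immersed torus R^2/(aZ x bZ) -> S^(k-1):  W = int (|H|^2 - K + 1) dM.\<close>
definition willmore :: "(real \<times> real \<Rightarrow> real^'k) \<Rightarrow> real \<Rightarrow> real \<Rightarrow> real" where
  "willmore x a b =
     integral (cbox (0, 0) (a, b))
       (\<lambda>p. ((norm (mean_curv_vec x p))\<^sup>2 - gauss_curv x p + 1) * sqrt (gdet x p))"

end

theory Submission
  imports Defs
begin

text \<open>Since both curves have unit speed, the tensor torus is flat and isothermally parametrized,
  and its Willmore density at \<open>(s, t)\<close> is \<open>(|\<gamma>''(s)|\<^sup>2 + |\<gamma>h''(t)|\<^sup>2 + 2) / 4\<close>.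
  Hence \<open>W(y) = (Lh \<integral>|\<gamma>''|\<^sup>2 + L \<integral>|\<gamma>h''|\<^sup>2 + 2 L Lh) / 4\<close>.
  The derivative \<open>\<gamma>'\<close> is \<open>L\<close>-periodic with mean zero, so Wirtinger's inequality gives
  \<open>\<integral>|\<gamma>''|\<^sup>2 \<ge> (2\<pi>/L)\<^sup>2 \<integral>|\<gamma>'|\<^sup>2 = 4\<pi>\<^sup>2/L\<close>, and therefore
  \<open>W(y) \<ge> \<pi>\<^sup>2 (Lh/L + L/Lh) + L Lh / 2 > 2\<pi>\<^sup>2\<close>.
  Wirtinger's inequality is reduced, via the half-period periodic and antiperiodic parts, to the
  bound \<open>\<integral>g'\<^sup>2 \<ge> (\<pi>/\<ell>)\<^sup>2 \<integral>g\<^sup>2\<close> for \<open>g\<close> vanishing at the ends of an interval of length \<open>\<ell>\<close>,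
  which follows from \<open>\<integral>(g' + w g)\<^sup>2 \<ge> 0\<close> for a solution \<open>w\<close> of \<open>w' = k\<^sup>2 + w\<^sup>2\<close>.\<close>

lemma Wirtinger_zero_boundary_below:
  fixes g g' :: "real \<Rightarrow> real"
  assumes g: "\<And>x. (g has_real_derivative g' x) (at x)" and g': "continuous_on {a..b} g'"
    and ab: "a < b" and ga: "g a = 0" and gb: "g b = 0"
    and k: "0 < k" "k < pi / (b - a)"
  shows "k\<^sup>2 * integral {a..b} (\<lambda>x. (g x)\<^sup>2) \<le> integral {a..b} (\<lambda>x. (g' x)\<^sup>2)"
proof -
  \<comment> \<open>\<open>w\<close> solves the Riccati equation \<open>w' = k\<^sup>2 + w\<^sup>2\<close>; it stays finite on \<open>[a, b]\<close> because \<open>k (b - a) < \<pi>\<close>\<close>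
  define w where "w x = k * tan (k * (x - (a + b) / 2))" for x
  define dw where "dw x = (k\<^sup>2 + (w x)\<^sup>2) * (g x)\<^sup>2 + 2 * w x * g x * g' x" for x
  have cos_pos: "cos (k * (x - (a + b) / 2)) > 0" if "x \<in> {a..b}" for x
  proof -
    have "\<bar>x - (a + b) / 2\<bar> \<le> (b - a) / 2"
      using that unfolding abs_le_iff by (auto simp: field_simps)
    then have "\<bar>k * (x - (a + b) / 2)\<bar> \<le> k * ((b - a) / 2)"
      using k by (simp add: abs_mult)
    also have "\<dots> < pi / 2"
      using k ab by (simp add: pos_less_divide_eq)
    finally show ?thesis by (intro cos_gt_zero_pi) auto
  qed
  have dw: "((\<lambda>x. w x * (g x)\<^sup>2) has_real_derivative dw x) (at x)" if "x \<in> {a..b}" for x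
  proof -
    define \<theta> where "\<theta> = k * (x - (a + b) / 2)"
    have cos: "cos \<theta> \<noteq> 0" using cos_pos[OF that] unfolding \<theta>_def by simp
    have deriv: "((\<lambda>x. w x * (g x)\<^sup>2) has_real_derivative
        k * (k * inverse ((cos \<theta>)\<^sup>2)) * (g x)\<^sup>2 + w x * (2 * g x * g' x)) (at x)"
      unfolding w_def \<theta>_def using cos[unfolded \<theta>_def] g[of x]
      by (auto intro!: derivative_eq_intros)
    have sec: "inverse ((cos \<theta>)\<^sup>2) = 1 + (tan \<theta>)\<^sup>2"
      by (metis tan_sec[OF cos] power_inverse)
    have sec_w: "k * (k * inverse ((cos \<theta>)\<^sup>2)) = k\<^sup>2 + (w x)\<^sup>2"
      unfolding sec w_def \<theta>_def[symmetric] by algebra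
    show ?thesis
      by (rule DERIV_cong[OF deriv]) (unfold sec_w dw_def, algebra)
  qed
  have square: "(g' x + w x * g x)\<^sup>2 = (g' x)\<^sup>2 - k\<^sup>2 * (g x)\<^sup>2 + dw x" for x
    unfolding dw_def by (simp add: power2_eq_square algebra_simps)
  have g_cont: "continuous_on {a..b} g"
    using g by (meson DERIV_isCont continuous_at_imp_continuous_on)
  have "(dw has_integral w b * (g b)\<^sup>2 - w a * (g a)\<^sup>2) {a..b}"
    using ab dw by (intro fundamental_theorem_of_calculus)
      (auto simp: has_real_derivative_iff_has_vector_derivative[symmetric] has_field_derivative_at_within)
  then have "(dw has_integral 0) {a..b}" using ga gb by simp
  then have "((\<lambda>x. (g' x)\<^sup>2 - k\<^sup>2 * (g x)\<^sup>2 + dw x) has_integral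
      integral {a..b} (\<lambda>x. (g' x)\<^sup>2) - k\<^sup>2 * integral {a..b} (\<lambda>x. (g x)\<^sup>2) + 0) {a..b}"
    by (intro has_integral_add has_integral_diff has_integral_mult_right integrable_integral
        integrable_continuous_interval continuous_intros g' g_cont)
  moreover have "0 \<le> (g' x)\<^sup>2 - k\<^sup>2 * (g x)\<^sup>2 + dw x" for x
    unfolding square[symmetric] by simp
  ultimately have "0 \<le> integral {a..b} (\<lambda>x. (g' x)\<^sup>2) - k\<^sup>2 * integral {a..b} (\<lambda>x. (g x)\<^sup>2) + 0"
    by (rule has_integral_nonneg)
  then show ?thesis by simp
qed

lemma Wirtinger_zero_boundary:
  fixes g g' :: "real \<Rightarrow> real"
  assumes "\<And>x. (g has_real_derivative g' x) (at x)" "continuous_on {a..b} g'"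
    and "a < b" "g a = 0" "g b = 0"
  shows "(pi / (b - a))\<^sup>2 * integral {a..b} (\<lambda>x. (g x)\<^sup>2) \<le> integral {a..b} (\<lambda>x. (g' x)\<^sup>2)"
proof (rule tendsto_le[OF trivial_limit_at_left_real])
  show "((\<lambda>k. k\<^sup>2 * integral {a..b} (\<lambda>x. (g x)\<^sup>2)) \<longlongrightarrow>
      (pi / (b - a))\<^sup>2 * integral {a..b} (\<lambda>x. (g x)\<^sup>2)) (at_left (pi / (b - a)))"
    by (intro tendsto_intros)
  have "0 < pi / (b - a)" using assms(3) by simp
  then show "\<forall>\<^sub>F k in at_left (pi / (b - a)).
      k\<^sup>2 * integral {a..b} (\<lambda>x. (g x)\<^sup>2) \<le> integral {a..b} (\<lambda>x. (g' x)\<^sup>2)"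
    by (rule eventually_mono[OF eventually_at_left_real])
      (auto intro: Wirtinger_zero_boundary_below[OF assms])
qed (rule tendsto_const)

lemma integral_periodic_shift:
  fixes h :: "real \<Rightarrow> real"
  assumes h: "continuous_on UNIV h" and per: "\<And>x. h (x + P) = h x" and b: "0 \<le> b" "b \<le> P"
  shows "integral {b..b + P} h = integral {0..P} h"
proof -
  have int: "h integrable_on {u..v}" for u v
    by (rule integrable_continuous_interval[OF continuous_on_subset[OF h]]) auto
  have "integral {P..b + P} h = integral {0..b} (\<lambda>x. h (x + P))"
    using integral_shift_Icc_real[of 0 b h P] by (simp add: comp_def add.commute)
  also have "\<dots> = integral {0..b} h" using per by simp
  finally have "integral {P..b + P} h = integral {0..b} h" .
  moreover have "integral {b..P} h + integral {P..b + P} h = integral {b..b + P} h"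
    using b int by (intro Henstock_Kurzweil_Integration.integral_combine) auto
  moreover have "integral {0..b} h + integral {b..P} h = integral {0..P} h"
    using b int by (intro Henstock_Kurzweil_Integration.integral_combine) auto
  ultimately show ?thesis by linarith
qed

lemma integral_fold_interval:
  fixes h :: "real \<Rightarrow> real"
  assumes h: "continuous_on UNIV h" and "0 \<le> P"
  shows "integral {0..2 * P} h = integral {0..P} (\<lambda>x. h x + h (x + P))"
proof -
  have int: "h integrable_on {u..v}" for u v
    by (rule integrable_continuous_interval[OF continuous_on_subset[OF h]]) auto
  have shift_int: "(\<lambda>x. h (x + P)) integrable_on {u..v}" for u v
    by (intro integrable_continuous_interval continuous_on_compose2[OF h] continuous_intros) simp
  have "integral {0..2 * P} h = integral {0..P} h + integral {P..2 * P} h"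
    using assms(2) int by (intro Henstock_Kurzweil_Integration.integral_combine[symmetric]) auto
  also have "integral {P..2 * P} h = integral {0..P} (\<lambda>x. h (x + P))"
    using integral_shift_Icc_real[of 0 P h P] unfolding mult_2 by (simp add: comp_def add.commute)
  also have "integral {0..P} h + \<dots> = integral {0..P} (\<lambda>x. h x + h (x + P))"
    by (rule integral_add[symmetric, OF int shift_int])
  finally show ?thesis .
qed

lemma integral_eq_0_imp_root:
  fixes e :: "real \<Rightarrow> real"
  assumes e: "continuous_on {a..b} e" and "a < b" and "integral {a..b} e = 0"
  obtains x where "x \<in> {a..b}" "e x = 0"
proof -
  obtain xm where xm: "xm \<in> {a..b}" "\<And>y. y \<in> {a..b} \<Longrightarrow> e xm \<le> e y"
    using continuous_attains_inf[OF compact_Icc _ e] assms(2) by auto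
  obtain xM where xM: "xM \<in> {a..b}" "\<And>y. y \<in> {a..b} \<Longrightarrow> e y \<le> e xM"
    using continuous_attains_sup[OF compact_Icc _ e] assms(2) by auto
  have int: "e integrable_on {a..b}" by (rule integrable_continuous_interval[OF e])
  have "(b - a) * e xm \<le> 0" and "0 \<le> (b - a) * e xM"
    using integral_le[OF integrable_const_ivl int, of "e xm"] integral_le[OF int integrable_const_ivl, of "e xM"]
      xm xM assms(2,3) by auto
  then have "e xm \<in> e ` {a..b}" "e xM \<in> e ` {a..b}" "e xm \<le> 0" "0 \<le> e xM"
    using xm xM assms(2) by (auto simp: mult_le_0_iff zero_le_mult_iff)
  moreover have "is_interval (e ` {a..b})"
    using connected_continuous_image[OF e connected_Icc] by (simp add: is_interval_connected_1)
  ultimately have "0 \<in> e ` {a..b}"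
    by (meson mem_is_interval_1_I)
  then show ?thesis using that by auto
qed

lemma antiperiodic_imp_root:
  fixes g :: "real \<Rightarrow> real"
  assumes g: "continuous_on {0..P} g" and "0 \<le> P" and "g P = - g 0"
  obtains x where "x \<in> {0..P}" "g x = 0"
proof -
  have "is_interval (g ` {0..P})"
    using connected_continuous_image[OF g connected_Icc] by (simp add: is_interval_connected_1)
  moreover have "g 0 \<in> g ` {0..P}" "g P \<in> g ` {0..P}" using assms(2) by auto
  moreover have "min (g 0) (g P) \<le> 0" "0 \<le> max (g 0) (g P)" using assms(3) by auto
  ultimately have "0 \<in> g ` {0..P}"
    by (metis max_def min_def mem_is_interval_1_I)
  then show ?thesis using that by auto
qed

lemma Wirtinger_signed_periodic:
  fixes g g' :: "real \<Rightarrow> real"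
  assumes g: "\<And>x. (g has_real_derivative g' x) (at x)" and g': "continuous_on UNIV g'"
    and \<sigma>: "\<sigma>\<^sup>2 = 1" and per: "\<And>x. g (x + P) = \<sigma> * g x" and per': "\<And>x. g' (x + P) = \<sigma> * g' x"
    and P: "0 < P" and b: "b \<in> {0..P}" "g b = 0"
  shows "(pi / P)\<^sup>2 * integral {0..P} (\<lambda>x. (g x)\<^sup>2) \<le> integral {0..P} (\<lambda>x. (g' x)\<^sup>2)"
proof -
  have g_cont: "continuous_on UNIV g"
    using g by (meson DERIV_isCont continuous_at_imp_continuous_on)
  have sq_per: "(f (x + P))\<^sup>2 = (f x)\<^sup>2" if "\<And>x. f (x + P) = \<sigma> * f x" for f :: "real \<Rightarrow> real" and x
    using that \<sigma> by (simp add: power_mult_distrib)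
  have "(pi / (b + P - b))\<^sup>2 * integral {b..b + P} (\<lambda>x. (g x)\<^sup>2) \<le> integral {b..b + P} (\<lambda>x. (g' x)\<^sup>2)"
    using b P per[of b] by (intro Wirtinger_zero_boundary[OF g continuous_on_subset[OF g']]) auto
  moreover have "integral {b..b + P} (\<lambda>x. (g x)\<^sup>2) = integral {0..P} (\<lambda>x. (g x)\<^sup>2)"
    using b sq_per[of g, OF per] by (intro integral_periodic_shift continuous_intros g_cont) auto
  moreover have "integral {b..b + P} (\<lambda>x. (g' x)\<^sup>2) = integral {0..P} (\<lambda>x. (g' x)\<^sup>2)"
    using b sq_per[of g', OF per'] by (intro integral_periodic_shift continuous_intros g') auto
  ultimately show ?thesis by simp
qed

lemma integral_sq_fold_interval:
  fixes f :: "real \<Rightarrow> real"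
  assumes f: "continuous_on UNIV f" and "0 \<le> P"
  shows "integral {0..2 * P} (\<lambda>x. (f x)\<^sup>2) =
    2 * integral {0..P} (\<lambda>x. ((f x + f (x + P)) / 2)\<^sup>2) + 2 * integral {0..P} (\<lambda>x. ((f x - f (x + P)) / 2)\<^sup>2)"
proof -
  have cont: "continuous_on UNIV (\<lambda>x. f (x + P))"
    by (intro continuous_on_compose2[OF f] continuous_intros) simp
  have "integral {0..2 * P} (\<lambda>x. (f x)\<^sup>2) = integral {0..P} (\<lambda>x. (f x)\<^sup>2 + (f (x + P))\<^sup>2)"
    using assms by (intro integral_fold_interval continuous_intros)
  also have "\<dots> = integral {0..P}
      (\<lambda>x. 2 * ((f x + f (x + P)) / 2)\<^sup>2 + 2 * ((f x - f (x + P)) / 2)\<^sup>2)"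
    by (rule integral_cong) (simp add: power2_eq_square field_simps)
  also have "\<dots> = 2 * integral {0..P} (\<lambda>x. ((f x + f (x + P)) / 2)\<^sup>2) +
      2 * integral {0..P} (\<lambda>x. ((f x - f (x + P)) / 2)\<^sup>2)"
    by (simp add: integral_add integrable_continuous_interval continuous_on_subset[OF f]
        continuous_on_subset[OF cont] continuous_intros)
  finally show ?thesis .
qed

lemma Wirtinger_periodic:
  fixes f f' :: "real \<Rightarrow> real"
  assumes f: "\<And>x. (f has_real_derivative f' x) (at x)" and f': "continuous_on UNIV f'"
    and L: "0 < L" and per: "\<And>x. f (x + L) = f x" and per': "\<And>x. f' (x + L) = f' x"
    and mean: "integral {0..L} f = 0"
  shows "(2 * pi / L)\<^sup>2 * integral {0..L} (\<lambda>x. (f x)\<^sup>2) \<le> integral {0..L} (\<lambda>x. (f' x)\<^sup>2)"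
proof -
  \<comment> \<open>split \<open>f\<close> into an \<open>L/2\<close>-periodic and an \<open>L/2\<close>-antiperiodic part; each has a zero in \<open>[0, L/2]\<close>\<close>
  define P where "P = L / 2"
  have P: "0 < P" "L = 2 * P" "2 * pi / L = pi / P" using L by (auto simp: P_def)
  define e e' d d' where
    "e x = (f x + f (x + P)) / 2" and "e' x = (f' x + f' (x + P)) / 2" and
    "d x = (f x - f (x + P)) / 2" and "d' x = (f' x - f' (x + P)) / 2" for x
  have f_cont: "continuous_on UNIV f"
    using f by (meson DERIV_isCont continuous_at_imp_continuous_on)
  have f_shift: "((\<lambda>x. f (x + P)) has_real_derivative f' (x + P)) (at x)" for x
    using f DERIV_shift by blast
  have e: "(e has_real_derivative e' x) (at x)" for x
    unfolding e_def e'_def by (intro DERIV_cdivide DERIV_add f f_shift)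
  have d: "(d has_real_derivative d' x) (at x)" for x
    unfolding d_def d'_def by (intro DERIV_cdivide DERIV_diff f f_shift)
  have e'_cont: "continuous_on UNIV e'" and d'_cont: "continuous_on UNIV d'"
    unfolding e'_def d'_def by (intro continuous_on_compose2[OF f'] continuous_intros; simp)+
  have twice: "u (x + P + P) = u x" if "\<And>x. u (x + L) = u x" for u :: "real \<Rightarrow> real" and x
    using that[of x] P(2) by (metis add.assoc mult_2)
  have e_per: "e (x + P) = 1 * e x" and e'_per: "e' (x + P) = 1 * e' x"
    and d_per: "d (x + P) = -1 * d x" and d'_per: "d' (x + P) = -1 * d' x" for x
    unfolding e_def e'_def d_def d'_def using twice[of f, OF per] twice[of f', OF per'] by auto
  have e_cont: "continuous_on {0..P} e" and d_cont: "continuous_on {0..P} d"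
    using e d by (meson DERIV_isCont continuous_at_imp_continuous_on)+
  have "integral {0..P} e = integral {0..L} f / 2"
    unfolding P(2) e_def using P(1)
    by (simp add: integral_fold_interval[OF f_cont] integral_divide)
  then obtain b where b: "b \<in> {0..P}" "e b = 0"
    using integral_eq_0_imp_root[OF e_cont P(1)] mean by auto
  obtain c where c: "c \<in> {0..P}" "d c = 0"
    using antiperiodic_imp_root[OF d_cont] d_per[of 0] P(1) by auto
  have "(pi / P)\<^sup>2 * integral {0..P} (\<lambda>x. (e x)\<^sup>2) \<le> integral {0..P} (\<lambda>x. (e' x)\<^sup>2)"
    by (rule Wirtinger_signed_periodic[OF e e'_cont _ e_per e'_per P(1) b]) simp
  moreover have "(pi / P)\<^sup>2 * integral {0..P} (\<lambda>x. (d x)\<^sup>2) \<le> integral {0..P} (\<lambda>x. (d' x)\<^sup>2)"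
    by (rule Wirtinger_signed_periodic[OF d d'_cont _ d_per d'_per P(1) c]) simp
  moreover have "integral {0..L} (\<lambda>x. (f x)\<^sup>2) =
      2 * integral {0..P} (\<lambda>x. (e x)\<^sup>2) + 2 * integral {0..P} (\<lambda>x. (d x)\<^sup>2)"
    unfolding P(2) e_def d_def using P(1) by (intro integral_sq_fold_interval f_cont) simp
  moreover have "integral {0..L} (\<lambda>x. (f' x)\<^sup>2) =
      2 * integral {0..P} (\<lambda>x. (e' x)\<^sup>2) + 2 * integral {0..P} (\<lambda>x. (d' x)\<^sup>2)"
    unfolding P(2) e'_def d'_def using P(1) by (intro integral_sq_fold_interval f') simp
  ultimately show ?thesis unfolding P(3) by (simp add: algebra_simps)
qed

lemma has_vector_derivative_periodic:
  fixes c :: "real \<Rightarrow> 'a::real_normed_vector"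
  assumes c: "\<And>s. (c has_vector_derivative c' s) (at s)" and per: "\<And>s. c (s + L) = c s"
  shows "c' (s + L) = c' s"
proof -
  have "((\<lambda>s. s + L) has_vector_derivative 1) (at s)"
    by (auto intro!: derivative_eq_intros simp: has_real_derivative_iff_has_vector_derivative[symmetric])
  from vector_diff_chain_at[OF this c]
  have "((\<lambda>s. c (s + L)) has_vector_derivative c' (s + L)) (at s)"
    by (simp add: o_def)
  then show ?thesis using per c[of s] by (simp add: vector_derivative_unique_at)
qed

lemma Wirtinger_periodic_curve:
  fixes c c1 c2 :: "real \<Rightarrow> real^'n"
  assumes c: "\<And>s. (c has_vector_derivative c1 s) (at s)" and c1: "\<And>s. (c1 has_vector_derivative c2 s) (at s)"
    and c2: "continuous_on UNIV c2" and L: "0 < L" and per: "\<And>s. c (s + L) = c s"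
  shows "(2 * pi / L)\<^sup>2 * integral {0..L} (\<lambda>s. c1 s \<bullet> c1 s) \<le> integral {0..L} (\<lambda>s. c2 s \<bullet> c2 s)"
proof -
  have comp: "((\<lambda>s. u s $ i) has_real_derivative u' s $ i) (at s)"
    if "\<And>s. (u has_vector_derivative u' s) (at s)" for u u' :: "real \<Rightarrow> real^'n" and i s
    unfolding has_real_derivative_iff_has_vector_derivative
    by (rule bounded_linear.has_vector_derivative[OF bounded_linear_vec_nth that])
  have cont: "continuous_on UNIV (\<lambda>s. u s $ i)" if "continuous_on UNIV u" for u :: "real \<Rightarrow> real^'n" and i
    by (intro continuous_intros that)
  have c1_cont: "continuous_on UNIV c1"
    using c1 by (meson continuous_at_imp_continuous_on has_vector_derivative_continuous)
  have sum_sq: "integral {0..L} (\<lambda>s. u s \<bullet> u s) = (\<Sum>i\<in>UNIV. integral {0..L} (\<lambda>s. (u s $ i)\<^sup>2))"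
    if "continuous_on UNIV u" for u :: "real \<Rightarrow> real^'n"
    unfolding inner_vec_def inner_real_def power2_eq_square[symmetric]
    by (intro integral_sum integrable_continuous_interval continuous_on_subset[OF cont[OF that]]
        continuous_intros) auto
  have "(2 * pi / L)\<^sup>2 * integral {0..L} (\<lambda>s. (c1 s $ i)\<^sup>2) \<le> integral {0..L} (\<lambda>s. (c2 s $ i)\<^sup>2)" for i
  proof (rule Wirtinger_periodic[OF comp[OF c1] cont[OF c2] L])
    show "c1 (s + L) $ i = c1 s $ i" for s
      using has_vector_derivative_periodic[OF c per] by simp
    show "c2 (s + L) $ i = c2 s $ i" for s
      using has_vector_derivative_periodic[OF c1 has_vector_derivative_periodic[OF c per]] by simp
    have "((\<lambda>s. c1 s $ i) has_integral c L $ i - c 0 $ i) {0..L}"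
      using L comp[OF c]
      by (intro fundamental_theorem_of_calculus)
        (auto simp: has_real_derivative_iff_has_vector_derivative[symmetric] has_field_derivative_at_within)
    then show "integral {0..L} (\<lambda>s. c1 s $ i) = 0"
      using per[of 0] by (simp add: integral_unique)
  qed
  then show ?thesis
    unfolding sum_sq[OF c1_cont] sum_sq[OF c2] sum_distrib_left by (rule sum_mono)
qed

lemma unit_speed_periodic_curve_bending:
  fixes c c1 c2 :: "real \<Rightarrow> real^'n"
  assumes c: "\<And>s. (c has_vector_derivative c1 s) (at s)" and c1: "\<And>s. (c1 has_vector_derivative c2 s) (at s)"
    and c2: "continuous_on UNIV c2" and L: "0 < L" and per: "\<And>s. c (s + L) = c s"
    and unit: "\<And>s. norm (c1 s) = 1"
  shows "4 * pi\<^sup>2 / L \<le> integral {0..L} (\<lambda>s. c2 s \<bullet> c2 s)"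
proof -
  have "c1 s \<bullet> c1 s = 1" for s
    using unit norm_eq_1 by blast
  then have "integral {0..L} (\<lambda>s. c1 s \<bullet> c1 s) = L"
    using L by simp
  moreover have "(2 * pi / L)\<^sup>2 * L = 4 * pi\<^sup>2 / L"
    using L by (simp add: power2_eq_square field_simps)
  ultimately show ?thesis
    using Wirtinger_periodic_curve[OF c c1 c2 L per] by simp
qed

lemma inner_derivative_eq_0_if_const:
  fixes u v :: "real \<Rightarrow> 'a::real_inner"
  assumes u: "(u has_vector_derivative u') (at s)" and v: "(v has_vector_derivative v') (at s)"
    and const: "\<And>s. u s \<bullet> v s = k"
  shows "u' \<bullet> v s + u s \<bullet> v' = 0"
proof -
  have "((\<lambda>s. u s \<bullet> v s) has_real_derivative u' \<bullet> v s + u s \<bullet> v') (at s)"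
    using has_derivative_inner[OF u[unfolded has_vector_derivative_def] v[unfolded has_vector_derivative_def]]
    unfolding has_field_derivative_def by (rule has_derivative_eq_rhs) (auto simp: algebra_simps)
  then have "((\<lambda>s. k) has_real_derivative u' \<bullet> v s + u s \<bullet> v') (at s)"
    using const by simp
  then show ?thesis using DERIV_const DERIV_unique by blast
qed

lemma unit_speed_sphere_curve_inner:
  fixes c c1 c2 :: "real \<Rightarrow> 'a::real_inner"
  assumes c: "\<And>s. (c has_vector_derivative c1 s) (at s)" and c1: "\<And>s. (c1 has_vector_derivative c2 s) (at s)"
    and sphere: "\<And>s. norm (c s) = 1" and unit: "\<And>s. norm (c1 s) = 1"
  shows "c s \<bullet> c1 s = 0" and "c1 s \<bullet> c2 s = 0" and "c s \<bullet> c2 s = -1"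
proof -
  have cc: "c s \<bullet> c s = 1" and c1c1: "c1 s \<bullet> c1 s = 1" for s
    using sphere unit norm_eq_1 by blast+
  have cc1: "c s \<bullet> c1 s = 0" for s
    using inner_derivative_eq_0_if_const[OF c c cc] by (simp add: inner_commute)
  show "c s \<bullet> c1 s = 0" by (rule cc1)
  show "c1 s \<bullet> c2 s = 0"
    using inner_derivative_eq_0_if_const[OF c1 c1 c1c1] by (simp add: inner_commute)
  show "c s \<bullet> c2 s = -1"
    using inner_derivative_eq_0_if_const[OF c c1 cc1, where s = s] c1c1[of s] by simp
qed

lemma closed_unit_speed_sphere_curveE:
  assumes "closed_unit_speed_sphere_curve c L"
  obtains c1 c2 where "\<And>s. (c has_vector_derivative c1 s) (at s)"
    and "\<And>s. (c1 has_vector_derivative c2 s) (at s)" and "continuous_on UNIV c2"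
    and "\<And>s. norm (c s) = 1" and "\<And>s. norm (c1 s) = 1"
proof -
  from assms obtain D where D0: "D 0 = c" and D: "\<And>k t. (D k has_vector_derivative D (Suc k) t) (at t)"
    and sphere: "\<And>s. norm (c s) = 1" and unit: "\<And>s. norm (vector_derivative c (at s)) = 1"
    unfolding closed_unit_speed_sphere_curve_def smooth_curve_def by blast
  have c: "(c has_vector_derivative D 1 s) (at s)" for s
    using D[of 0] D0 by simp
  moreover have "(D 1 has_vector_derivative D 2 s) (at s)" for s
    using D[of 1] by (simp add: numeral_2_eq_2)
  moreover have "continuous_on UNIV (D 2)"
    using D by (meson continuous_at_imp_continuous_on has_vector_derivative_continuous)
  moreover have "norm (D 1 s) = 1" for s
    using unit[of s] vector_derivative_at[OF c] by simp
  ultimately show ?thesis using that sphere by blast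
qed

lemma tensor_inner: "tensor a b \<bullet> tensor c d = (a \<bullet> c) * (b \<bullet> d)"
proof -
  have "tensor a b \<bullet> tensor c d = (\<Sum>(i, j)\<in>UNIV \<times> UNIV. (a $ i * c $ i) * (b $ j * d $ j))"
    unfolding inner_vec_def tensor_def UNIV_Times_UNIV by (simp add: split_def mult_ac)
  also have "\<dots> = (a \<bullet> c) * (b \<bullet> d)"
    unfolding inner_vec_def sum.cartesian_product[symmetric] by (simp add: sum_product)
  finally show ?thesis .
qed

lemma bounded_linear_tensor_left: "bounded_linear (\<lambda>a. tensor a b)"
  by (rule linear_conv_bounded_linear[THEN iffD1], rule linearI)
    (simp_all add: tensor_def vec_eq_iff algebra_simps)

lemma bounded_linear_tensor_right: "bounded_linear (\<lambda>b. tensor a b)"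
  by (rule linear_conv_bounded_linear[THEN iffD1], rule linearI)
    (simp_all add: tensor_def vec_eq_iff algebra_simps)

lemma pd1_tensor_torus:
  assumes "\<And>s. (c has_vector_derivative c' s) (at s)"
  shows "pd1 (tensor_torus c d) = tensor_torus c' d"
proof -
  have "((\<lambda>u. tensor (c u) (d t)) has_vector_derivative tensor (c' s) (d t)) (at s)" for s t
    by (rule bounded_linear.has_vector_derivative[OF bounded_linear_tensor_left assms])
  then show ?thesis
    unfolding pd1_def tensor_torus_def by (auto simp: vector_derivative_at)
qed

lemma pd2_tensor_torus:
  assumes "\<And>t. (d has_vector_derivative d' t) (at t)"
  shows "pd2 (tensor_torus c d) = tensor_torus c d'"
proof -
  have "((\<lambda>v. tensor (c s) (d v)) has_vector_derivative tensor (c s) (d' t)) (at t)" for s t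
    by (rule bounded_linear.has_vector_derivative[OF bounded_linear_tensor_right assms])
  then show ?thesis
    unfolding pd2_def tensor_torus_def by (auto simp: vector_derivative_at)
qed

lemma willmore_density_tensor:
  fixes a0 a1 a2 :: "real^'n" and b0 b1 b2 :: "real^'m" and x :: "real \<times> real \<Rightarrow> real^('n \<times> 'm)"
  assumes a: "a0 \<bullet> a0 = 1" "a0 \<bullet> a1 = 0" "a1 \<bullet> a1 = 1" "a1 \<bullet> a2 = 0" "a0 \<bullet> a2 = -1"
    and b: "b0 \<bullet> b0 = 1" "b0 \<bullet> b1 = 0" "b1 \<bullet> b1 = 1" "b1 \<bullet> b2 = 0" "b0 \<bullet> b2 = -1"
    and x: "x p = tensor a0 b0" "pd1 x p = tensor a1 b0" "pd2 x p = tensor a0 b1"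
      "x11 x p = tensor a2 b0" "x12 x p = tensor a1 b1" "x22 x p = tensor a0 b2"
  shows "((norm (mean_curv_vec x p))\<^sup>2 - gauss_curv x p + 1) * sqrt (gdet x p) = (a2 \<bullet> a2 + b2 \<bullet> b2 + 2) / 4"
proof -
  have a': "a1 \<bullet> a0 = 0" "a2 \<bullet> a1 = 0" "a2 \<bullet> a0 = -1"
    and b': "b1 \<bullet> b0 = 0" "b2 \<bullet> b1 = 0" "b2 \<bullet> b0 = -1"
    using a b by (simp_all add: inner_commute)
  note ip = tensor_inner a a' b b'
  have E: "fE x p = 1" and F: "fF x p = 0" and G: "fG x p = 1" and g: "gdet x p = 1"
    unfolding gdet_def fE_def fF_def fG_def x by (simp_all add: ip)
  have en: "eucl_normal x p v = v - (v \<bullet> pd1 x p) *\<^sub>R pd1 x p - (v \<bullet> pd2 x p) *\<^sub>R pd2 x p" for v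
    unfolding eucl_normal_def tan_part_def g E F G by (simp add: algebra_simps)
  have "mean_curv_vec x p = (1 / 2) *\<^sub>R (tensor a2 b0 + tensor a0 b2 + 2 *\<^sub>R tensor a0 b0)"
    unfolding mean_curv_vec_def sphere_normal_def en g E F G x by (simp add: ip algebra_simps scaleR_2)
  then have "(norm (mean_curv_vec x p))\<^sup>2 = (a2 \<bullet> a2 + b2 \<bullet> b2 - 2) / 4"
    unfolding power2_norm_eq_inner by (simp add: inner_add_left inner_add_right ip algebra_simps)
  moreover have "gauss_curv x p = 0"
    unfolding gauss_curv_def g en x by (simp add: ip)
  ultimately show ?thesis using g by (simp add: field_simps)
qed

lemma integral_cbox_separable:
  fixes f g :: "real \<Rightarrow> real"
  assumes f: "continuous_on {a..b} f" and g: "continuous_on {c..d} g" and "a \<le> b" "c \<le> d"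
  shows "integral (cbox (a, c) (b, d)) (\<lambda>p. f (fst p) + g (snd p)) =
    (d - c) * integral {a..b} f + (b - a) * integral {c..d} g"
proof -
  have "continuous_on (cbox (a, c) (b, d)) (\<lambda>p. f (fst p) + g (snd p))"
    by (intro continuous_intros continuous_on_compose2[OF f] continuous_on_compose2[OF g])
      (auto simp: cbox_Pair_eq)
  then have "integral (cbox (a, c) (b, d)) (\<lambda>p. f (fst p) + g (snd p)) =
      integral {a..b} (\<lambda>s. integral {c..d} (\<lambda>t. f s + g t))"
    by (simp add: integral_prod_continuous)
  also have "\<dots> = integral {a..b} (\<lambda>s. (d - c) * f s + integral {c..d} g)"
    using assms(4) by (intro integral_cong) (simp add: integral_add integrable_continuous_interval g)
  also have "\<dots> = (d - c) * integral {a..b} f + (b - a) * integral {c..d} g"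
    using assms(3) by (subst integral_add) (auto intro!: integrable_continuous_interval continuous_intros f)
  finally show ?thesis .
qed

lemma willmore_tensor_torus:
  fixes \<gamma> \<gamma>1 \<gamma>2 :: "real \<Rightarrow> real^'n" and \<delta> \<delta>1 \<delta>2 :: "real \<Rightarrow> real^'m"
  assumes \<gamma>: "\<And>s. (\<gamma> has_vector_derivative \<gamma>1 s) (at s)" "\<And>s. (\<gamma>1 has_vector_derivative \<gamma>2 s) (at s)"
      "continuous_on UNIV \<gamma>2" "\<And>s. norm (\<gamma> s) = 1" "\<And>s. norm (\<gamma>1 s) = 1"
    and \<delta>: "\<And>t. (\<delta> has_vector_derivative \<delta>1 t) (at t)" "\<And>t. (\<delta>1 has_vector_derivative \<delta>2 t) (at t)"
      "continuous_on UNIV \<delta>2" "\<And>t. norm (\<delta> t) = 1" "\<And>t. norm (\<delta>1 t) = 1"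
    and "0 \<le> L" "0 \<le> M"
  shows "willmore (tensor_torus \<gamma> \<delta>) L M =
    (M * integral {0..L} (\<lambda>s. \<gamma>2 s \<bullet> \<gamma>2 s) + L * integral {0..M} (\<lambda>t. \<delta>2 t \<bullet> \<delta>2 t) + 2 * L * M) / 4"
proof -
  define y where "y = tensor_torus \<gamma> \<delta>"
  have y1: "pd1 y = tensor_torus \<gamma>1 \<delta>" and y2: "pd2 y = tensor_torus \<gamma> \<delta>1"
    unfolding y_def by (rule pd1_tensor_torus[OF \<gamma>(1)], rule pd2_tensor_torus[OF \<delta>(1)])
  have jet: "x11 y = tensor_torus \<gamma>2 \<delta>" "x12 y = tensor_torus \<gamma>1 \<delta>1" "x22 y = tensor_torus \<gamma> \<delta>2"
    unfolding x11_def x12_def x22_def y1 y2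
    by (rule pd1_tensor_torus[OF \<gamma>(2)], rule pd2_tensor_torus[OF \<delta>(1)], rule pd2_tensor_torus[OF \<delta>(2)])
  have yp: "y p = tensor (\<gamma> (fst p)) (\<delta> (snd p))" for p
    unfolding y_def tensor_torus_def by (simp add: split_beta)
  have "((norm (mean_curv_vec y p))\<^sup>2 - gauss_curv y p + 1) * sqrt (gdet y p) =
      (\<gamma>2 (fst p) \<bullet> \<gamma>2 (fst p) / 4 + 1 / 2) + \<delta>2 (snd p) \<bullet> \<delta>2 (snd p) / 4" for p
  proof -
    have "((norm (mean_curv_vec y p))\<^sup>2 - gauss_curv y p + 1) * sqrt (gdet y p) =
        (\<gamma>2 (fst p) \<bullet> \<gamma>2 (fst p) + \<delta>2 (snd p) \<bullet> \<delta>2 (snd p) + 2) / 4"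
      using unit_speed_sphere_curve_inner[OF \<gamma>(1,2,4,5)] unit_speed_sphere_curve_inner[OF \<delta>(1,2,4,5)]
        \<gamma>(4,5) \<delta>(4,5)
      by (intro willmore_density_tensor[of "\<gamma> (fst p)" "\<gamma>1 (fst p)" "\<gamma>2 (fst p)"
            "\<delta> (snd p)" "\<delta>1 (snd p)" "\<delta>2 (snd p)"])
        (simp_all add: yp y1 y2 jet tensor_torus_def norm_eq_1 inner_commute split_beta)
    then show ?thesis by simp
  qed
  then have "willmore y L M = integral (cbox (0, 0) (L, M))
      (\<lambda>p. (\<gamma>2 (fst p) \<bullet> \<gamma>2 (fst p) / 4 + 1 / 2) + \<delta>2 (snd p) \<bullet> \<delta>2 (snd p) / 4)"
    unfolding willmore_def by simp
  also have "\<dots> = M * integral {0..L} (\<lambda>s. \<gamma>2 s \<bullet> \<gamma>2 s / 4 + 1 / 2) +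
      L * integral {0..M} (\<lambda>t. \<delta>2 t \<bullet> \<delta>2 t / 4)"
    using assms(11,12)
    by (subst integral_cbox_separable) (auto intro!: continuous_intros continuous_on_subset[OF \<gamma>(3)]
        continuous_on_subset[OF \<delta>(3)])
  also have "\<dots> = (M * integral {0..L} (\<lambda>s. \<gamma>2 s \<bullet> \<gamma>2 s) + L * integral {0..M} (\<lambda>t. \<delta>2 t \<bullet> \<delta>2 t) + 2 * L * M) / 4"
    using assms(11) by (subst integral_add)
      (auto intro!: integrable_continuous_interval continuous_intros continuous_on_subset[OF \<gamma>(3)]
        simp: integral_divide algebra_simps)
  finally show ?thesis unfolding y_def .
qed

theorem proposition3p7:
  fixes \<gamma> :: "real \<Rightarrow> real^'n" and \<gamma>h :: "real \<Rightarrow> real^'m" and L Lh :: real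
  assumes "closed_unit_speed_sphere_curve \<gamma> L"
    and "closed_unit_speed_sphere_curve \<gamma>h Lh"
  shows "willmore (tensor_torus \<gamma> \<gamma>h) L Lh > 2 * pi\<^sup>2"
proof -
  obtain \<gamma>1 \<gamma>2 where \<gamma>: "\<And>s. (\<gamma> has_vector_derivative \<gamma>1 s) (at s)" "\<And>s. (\<gamma>1 has_vector_derivative \<gamma>2 s) (at s)"
      "continuous_on UNIV \<gamma>2" "\<And>s. norm (\<gamma> s) = 1" "\<And>s. norm (\<gamma>1 s) = 1"
    using closed_unit_speed_sphere_curveE[OF assms(1)] by blast
  obtain \<delta>1 \<delta>2 where \<delta>: "\<And>t. (\<gamma>h has_vector_derivative \<delta>1 t) (at t)" "\<And>t. (\<delta>1 has_vector_derivative \<delta>2 t) (at t)"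
      "continuous_on UNIV \<delta>2" "\<And>t. norm (\<gamma>h t) = 1" "\<And>t. norm (\<delta>1 t) = 1"
    using closed_unit_speed_sphere_curveE[OF assms(2)] by blast
  have L: "0 < L" "\<And>s. \<gamma> (s + L) = \<gamma> s" and Lh: "0 < Lh" "\<And>t. \<gamma>h (t + Lh) = \<gamma>h t"
    using assms unfolding closed_unit_speed_sphere_curve_def by auto
  define A B where "A = integral {0..L} (\<lambda>s. \<gamma>2 s \<bullet> \<gamma>2 s)" and "B = integral {0..Lh} (\<lambda>t. \<delta>2 t \<bullet> \<delta>2 t)"
  have "4 * pi\<^sup>2 / L \<le> A" "4 * pi\<^sup>2 / Lh \<le> B"
    unfolding A_def B_def using unit_speed_periodic_curve_bending \<gamma>(1-3,5) \<delta>(1-3,5) L Lh by blast+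
  then have "Lh * (4 * pi\<^sup>2 / L) + L * (4 * pi\<^sup>2 / Lh) \<le> Lh * A + L * B"
    using L(1) Lh(1) by (intro add_mono mult_left_mono) auto
  moreover have "Lh * (4 * pi\<^sup>2 / L) + L * (4 * pi\<^sup>2 / Lh) = 8 * pi\<^sup>2 + 4 * pi\<^sup>2 * (L - Lh)\<^sup>2 / (L * Lh)"
    using L(1) Lh(1) by (simp add: field_simps power2_eq_square)
  moreover have "0 \<le> 4 * pi\<^sup>2 * (L - Lh)\<^sup>2 / (L * Lh)" "0 < 2 * L * Lh"
    using L(1) Lh(1) by simp_all
  ultimately have "8 * pi\<^sup>2 < Lh * A + L * B + 2 * L * Lh"
    by linarith
  then show ?thesis
    using willmore_tensor_torus[OF \<gamma> \<delta> less_imp_le[OF L(1)] less_imp_le[OF Lh(1)]]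
    unfolding A_def B_def by simp
qed

end
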